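(* Let $\Sigma$ be a finite alphabet and let $f:\Sigma^*\to\Sigma^*$ be a function computed by a Turing machine $\mathcal{M} = (\Sigma_\Box, Q, q_{in}, q_{fin}, \delta)$ in time $g:\mathbb{N}\to\mathbb{N}$. Then there exist a closed term $\overline{\mathcal{M}}\in\Lambda_{\mathtt{det}}$ and constants $A,B,C>0$ (depending only on $\mathcal{M}$) such that for every $s\in\Sigma^*$, $$\overline{\mathcal{M}}\;\ulcorner s\urcorner^{\Sigma^*} \to_{\mathtt{det}}^{n} \ulcorner f(s)\urcorner^{\Sigma^*}$$ for some $n$ with $A\,(g(|s|)+|s|) \le n \le B\,(g(|s|)+|s|) + C$, i.e. $n = \Theta(g(|s|)+|s|)$.
   Context: The deterministic $\lambda$-calculus $\Lambda_{\mathtt{det}}$ has terms and values given by the grammar: terms $t ::= v \mid t\,v$; values $v ::= \lambda x.t \mid x$. Evaluation contexts are $E ::= [\cdot] \mid E\,v$ (they never enter abstractions). The reduction $\to_{\mathtt{det}}$ is the closure under evaluation contexts of $(\lambda x.t)\,s \mapsto t\{x:=s\}$; $t \to_{\mathtt{det}}^n s$ means $t$ reduces to $s$ in exactly $n$ steps. Application associates to the left. Scott encoding: for a finite totally ordered alphabet $\Gamma = \{c_1,\dots,c_m\}$, $\ulcorner c_i\urcorner^{\Gamma} := \lambda x_1.\cdots.\lambda x_m.x_i$, $\ulcorner \varepsilon\urcorner^{\Gamma^*} := \lambda x_1.\cdots.\lambda x_m.\lambda y.y$ and $\ulcorner c_i r\urcorner^{\Gamma^*} := \lambda x_1.\cdots.\lambda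 x_m.\lambda y.\,x_i\,\ulcorner r\urcorner^{\Gamma^*}$. Turing machines: $\mathcal{M} = (\Sigma_\Box, Q, q_{in}, q_{fin}, \delta)$ where $\Sigma$ is a finite alphabet, $\Sigma_\Box = \Sigma\cup\{\Box\}$ with blank symbol $\Box\notin\Sigma$, $Q$ is a finite set of states, $q_{in},q_{fin}\in Q$, and $\delta : Q\times\Sigma_\Box \rightharpoonup Q\times\Sigma_\Box\times\{\leftarrow,\rightarrow,\downarrow\}$ is defined exactly on pairs with first component $\neq q_{fin}$. A configuration is $(s,a,r,q)\in\Sigma_\Box^*\times\Sigma_\Box\times\Sigma_\Box^*\times Q$ (tape left of the head, head cell, tape right of the head, state). The transition relation $\to_{\mathcal{M}}$: if $\delta(q,a) = (q',b,\downarrow)$ then $(s,a,r,q)\to_{\mathcal{M}}(s,b,r,q')$; if $\delta(q,a)=(q',b,\leftarrow)$ then $(s'c,a,r,q)\to_{\mathcal{M}}(s',c,br,q')$ and $(\varepsilon,a,r,q)\to_{\mathcal{M}}(\varepsilon,\Box,br,q')$; if $\delta(q,a)=(q',b,\rightarrow)$ then $(s,a,cr',q)\to_{\mathcal{M}}(sb,c,r',q')$ and $(s,a,\varepsilon,q)\to_{\mathcal{M}}(sb,\Box,\varepsilon,q')$. The initial configuration for $s\in\Sigma^*$ is $(\varepsilon,\Box,s,q_{in})$ and the final configuration for $s$ is $(\varepsilon,\Box,s,q_{fin})$. $\mathcal{M}$ computes $f:\Sigma^*\to\Sigma^*$ in time $g$ if for every $s\in\Sigma^*$ the initial configuration for $s$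 evolves via $\to_{\mathcal{M}}$ to the final configuration for $f(s)$ in exactly $g(|s|)$ steps. *)

theory Defs
  imports Complex_Main
begin

datatype trm = Val val | App trm val
and val = Var nat | Lam trm

fun lift_t :: "nat \<Rightarrow> trm \<Rightarrow> trm" and lift_v :: "nat \<Rightarrow> val \<Rightarrow> val" where
  "lift_t k (Val v) = Val (lift_v k v)"
| "lift_t k (App t v) = App (lift_t k t) (lift_v k v)"
| "lift_v k (Var i) = Var (if i < k then i else Suc i)"
| "lift_v k (Lam t) = Lam (lift_t (Suc k) t)"

fun subst_t :: "nat \<Rightarrow> val \<Rightarrow> trm \<Rightarrow> trm" and subst_v :: "nat \<Rightarrow> val \<Rightarrow> val \<Rightarrow> val" where
  "subst_t k s (Val v) = Val (subst_v k s v)"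
| "subst_t k s (App t v) = App (subst_t k s t) (subst_v k s v)"
| "subst_v k s (Var i) = (if i < k then Var i else if i = k then s else Var (i - 1))"
| "subst_v k s (Lam t) = Lam (subst_t (Suc k) (lift_v 0 s) t)"

inductive det_step :: "trm \<Rightarrow> trm \<Rightarrow> bool" where
  beta: "det_step (App (Val (Lam t)) s) (subst_t 0 s t)"
| ctx: "det_step t t' \<Longrightarrow> det_step (App t v) (App t' v)"

fun closed_t :: "nat \<Rightarrow> trm \<Rightarrow> bool" and closed_v :: "nat \<Rightarrow> val \<Rightarrow> bool" where
  "closed_t k (Val v) = closed_v k v"
| "closed_t k (App t v) = (closed_t k t \<and> closed_v k v)"
| "closed_v k (Var i) = (i < k)"
| "closed_v k (Lam t) = closed_t (Suc k) t"

definition closed :: "trm \<Rightarrow> bool" where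
  "closed t = closed_t 0 t"

text \<open>The alphabet is the finite type 'a, ordered by its linear order: c_1 < ... < c_m.\<close>
definition alph :: "'a::{finite,linorder} list" where
  "alph = sorted_list_of_set (UNIV :: 'a set)"

fun pos_in :: "'a list \<Rightarrow> 'a \<Rightarrow> nat" where
  "pos_in [] c = 0"
| "pos_in (x # xs) c = (if x = c then 0 else Suc (pos_in xs c))"

text \<open>0-based position of c in the ordering (c = c_(i+1)).\<close>
definition sym_idx :: "'a::{finite,linorder} \<Rightarrow> nat" where
  "sym_idx c = pos_in (alph :: 'a list) c"

fun lams :: "nat \<Rightarrow> trm \<Rightarrow> trm" where
  "lams 0 t = t"
| "lams (Suc n) t = Val (Lam (lams n t))"

text \<open>enc [] = lambda x_1 ... x_m y. y ;  enc (c_i r) = lambda x_1 ... x_m y. x_i (enc r).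
  Under the m+1 binders, y has index 0 and x_i has index m - i + 1.\<close>
fun enc_str :: "'a::{finite,linorder} list \<Rightarrow> val" where
  "enc_str [] = Lam (lams (length (alph :: 'a list)) (Val (Var 0)))"
| "enc_str (c # r) = Lam (lams (length (alph :: 'a list))
      (App (Val (Var (length (alph :: 'a list) - sym_idx c))) (enc_str r)))"

text \<open>Tape symbols: 'a option, with None the blank symbol.\<close>
datatype dir = DLeft | DRight | DStay

record ('a, 'q) tm =
  q_in :: 'q
  q_fin :: 'q
  delta :: "'q \<Rightarrow> 'a option \<Rightarrow> ('q \<times> 'a option \<times> dir) option"

definition valid_tm :: "('a, 'q) tm \<Rightarrow> bool" where
  "valid_tm M = (\<forall>q a. (delta M q a \<noteq> None) \<longleftrightarrow> q \<noteq> q_fin M)"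

text \<open>Configuration (s, a, r, q): s is the tape left of the head (last element adjacent to the head).\<close>
type_synonym ('a, 'q) config = "'a option list \<times> 'a option \<times> 'a option list \<times> 'q"

inductive tm_step :: "('a, 'q) tm \<Rightarrow> ('a, 'q) config \<Rightarrow> ('a, 'q) config \<Rightarrow> bool" for M where
  stay: "delta M q a = Some (q', b, DStay) \<Longrightarrow> tm_step M (s, a, r, q) (s, b, r, q')"
| left: "delta M q a = Some (q', b, DLeft) \<Longrightarrow> tm_step M (s' @ [c], a, r, q) (s', c, b # r, q')"
| left_end: "delta M q a = Some (q', b, DLeft) \<Longrightarrow> tm_step M ([], a, r, q) ([], None, b # r, q')"
| right: "delta M q a = Some (q', b, DRight) \<Longrightarrow> tm_step M (s, a, c # r', q) (s @ [b], c, r', q')"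
| right_end: "delta M q a = Some (q', b, DRight) \<Longrightarrow> tm_step M (s, a, [], q) (s @ [b], None, [], q')"

definition computes_in_time :: "('a, 'q) tm \<Rightarrow> ('a list \<Rightarrow> 'a list) \<Rightarrow> (nat \<Rightarrow> nat) \<Rightarrow> bool" where
  "computes_in_time M f g =
    (\<forall>s. ((tm_step M) ^^ g (length s)) ([], None, map Some s, q_in M)
                                      ([], None, map Some (f s), q_fin M))"

end

theory Submission
  imports Defs "HOL-Library.Cardinality"
begin

text \<open>The machine is compiled into a single closed term working on Scott encodings. A configuration
  \<open>(s, a, r, q)\<close> is represented by a loop term applied to itself, to the encodings of \<open>q\<close> and \<open>a\<close>,
  and to the two halves of the tape as Scott lists, the left half reversed. Applying the
  encoding of \<open>a\<close> and then that of \<open>q\<close> to the rows of the transition table selects the entry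
  for \<open>(q, a)\<close>, which rebuilds the successor configuration; so every machine step costs between
  one and a constant number of beta steps, the constant depending only on \<open>|\<Sigma>|\<close> and \<open>|Q|\<close>.
  Converting the input string into a tape and the final tape back into a string costs time
  linear in their lengths, and the output is at most \<open>|s| + g(|s|)\<close> long because each step
  extends the tape by at most one cell.\<close>

section \<open>Closed terms, iterated application and beta reduction\<close>

lemma closed_mono:
  fixes t :: trm and v :: val
  shows "closed_t j t \<Longrightarrow> j \<le> k \<Longrightarrow> closed_t k t"
    and "closed_v j v \<Longrightarrow> j \<le> k \<Longrightarrow> closed_v k v"
  by (induct t and v arbitrary: j k and j k) auto

lemma lift_closed:
  fixes t :: trm and v :: val
  shows "closed_t j t \<Longrightarrow> j \<le> k \<Longrightarrow> lift_t k t = t"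
    and "closed_v j v \<Longrightarrow> j \<le> k \<Longrightarrow> lift_v k v = v"
  by (induct t and v arbitrary: j k and j k) auto

lemma subst_closed:
  fixes t :: trm and v :: val
  shows "closed_t j t \<Longrightarrow> j \<le> k \<Longrightarrow> subst_t k s t = t"
    and "closed_v j v \<Longrightarrow> j \<le> k \<Longrightarrow> subst_v k s v = v"
  by (induct t and v arbitrary: j k s and j k s) auto

text \<open>Not stated for an arbitrary level \<open>k\<close>: the instance \<open>k = 0\<close> would loop in the simplifier.\<close>

lemma closed_v_0_mono [simp]:
  "closed_v 0 v \<Longrightarrow> closed_v (Suc k) v" "closed_v 0 v \<Longrightarrow> closed_v (numeral n) v"
  using closed_mono(2) by auto

lemma lift_v_closed_0 [simp]: "closed_v 0 v \<Longrightarrow> lift_v k v = v"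
  using lift_closed(2) by blast

lemma subst_v_closed_0 [simp]: "closed_v 0 v \<Longrightarrow> subst_v k s v = v"
  using subst_closed(2) by blast

lemma subst_t_closed_0 [simp]: "closed_t 0 t \<Longrightarrow> subst_t k s t = t"
  using subst_closed(1) by blast

lemma map_subst_v_closed_0 [simp]: "\<forall>w\<in>set ws. closed_v 0 w \<Longrightarrow> map (subst_v k s) ws = ws"
  by (induct ws) auto

lemma map_subst_v_comp_closed_0 [simp]:
  "(\<And>x. closed_v 0 (f x)) \<Longrightarrow> map (subst_v k s \<circ> f) xs = map f xs"
  by (induct xs) auto

lemma subst_lams [simp]: "closed_v 0 s \<Longrightarrow> subst_t k s (lams n t) = lams n (subst_t (k + n) s t)"
  by (induct n arbitrary: k) auto

lemma closed_lams [simp]: "closed_t k (lams n t) = closed_t (k + n) t"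
  by (induct n arbitrary: k) auto

fun apps :: "trm \<Rightarrow> val list \<Rightarrow> trm" where
  "apps t [] = t"
| "apps t (v # vs) = apps (App t v) vs"

lemma apps_append: "apps t (xs @ ys) = apps (apps t xs) ys"
  by (induct xs arbitrary: t) auto

lemma subst_apps [simp]: "subst_t k s (apps t ws) = apps (subst_t k s t) (map (subst_v k s) ws)"
  by (induct ws arbitrary: t) auto

lemma closed_apps [simp]: "closed_t k (apps t ws) = (closed_t k t \<and> (\<forall>w\<in>set ws. closed_v k w))"
  by (induct ws arbitrary: t) auto

lemma det_step_apps: "det_step t t' \<Longrightarrow> det_step (apps t ws) (apps t' ws)"
  by (induct ws arbitrary: t t') (auto intro: det_step.ctx)

text \<open>Simultaneous substitution: the first value replaces the outermost of the bound variables.\<close>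

fun substs :: "val list \<Rightarrow> trm \<Rightarrow> trm" where
  "substs [] b = b"
| "substs (v # vs) b = substs vs (subst_t (length vs) v b)"

lemma substs_closed: "closed_t 0 t \<Longrightarrow> substs vs t = t"
  by (induct vs) auto

lemma substs_Var:
  assumes "j < length vs" "\<forall>v\<in>set vs. closed_v 0 v"
  shows "substs vs (Val (Var j)) = Val (vs ! (length vs - 1 - j))"
  using assms
proof (induct vs arbitrary: j)
  case Nil
  then show ?case by simp
next
  case (Cons v vs)
  show ?case
  proof (cases "j < length vs")
    case True
    then show ?thesis using Cons by (simp add: Suc_diff_Suc nth_Cons')
  next
    case False
    then have "j = length vs" using Cons by simp
    then show ?thesis using Cons substs_closed[of "Val v" vs] by simp
  qed
qed

lemma substs_App: "closed_v 0 w \<Longrightarrow> substs vs (App t w) = App (substs vs t) w"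
  by (induct vs arbitrary: t) auto

lemma apps_lams_steps:
  assumes "length vs = Suc n" "\<forall>v\<in>set vs. closed_v 0 v"
  shows "(det_step ^^ Suc n) (apps (Val (Lam (lams n b))) (vs @ ws)) (apps (substs vs b) ws)"
  using assms
proof (induct n arbitrary: vs b)
  case 0
  then obtain v where "vs = [v]" by (cases vs) auto
  then show ?case by (auto intro: det_step_apps det_step.beta)
next
  case (Suc n)
  then obtain v vs' where vs: "vs = v # vs'" and len: "length vs' = Suc n" by (cases vs) auto
  have "closed_v 0 v" using Suc.prems vs by auto
  then have "det_step (App (Val (Lam (lams (Suc n) b))) v) (lams (Suc n) (subst_t (Suc n) v b))"
    using det_step.beta[of "lams (Suc n) b" v] by simp
  then have "det_step (apps (Val (Lam (lams (Suc n) b))) (vs @ ws))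
      (apps (Val (Lam (lams n (subst_t (Suc n) v b)))) (vs' @ ws))"
    using vs det_step_apps by fastforce
  moreover have "(det_step ^^ Suc n) (apps (Val (Lam (lams n (subst_t (Suc n) v b)))) (vs' @ ws))
      (apps (substs vs' (subst_t (Suc n) v b)) ws)"
    using Suc.hyps len Suc.prems vs by auto
  moreover have "substs vs b = substs vs' (subst_t (Suc n) v b)"
    using vs len by simp
  ultimately show ?case by (metis relpowp_Suc_I2)
qed

lemma apps_Lam_eq_steps:
  "f = Lam (lams n b) \<Longrightarrow> length vs = Suc n \<Longrightarrow> \<forall>v\<in>set vs. closed_v 0 v \<Longrightarrow>
   (det_step ^^ Suc n) (apps (Val f) (vs @ ws)) (apps (substs vs b) ws)"
  using apps_lams_steps by simp

lemma apps_Lam_eq_step: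
  "f = Lam b \<Longrightarrow> closed_v 0 v \<Longrightarrow>
   (det_step ^^ 1) (apps (Val f) (v # ws)) (apps (subst_t 0 v b) ws)"
  using apps_lams_steps[of "[v]" 0 b ws] by simp

section \<open>Scott-encoded data\<close>

text \<open>\<open>proj N i\<close> is \<open>\<lambda>x\<^sub>0 \<dots> x\<^sub>N\<^sub>-\<^sub>1. x\<^sub>i\<close>.\<close>

definition proj :: "nat \<Rightarrow> nat \<Rightarrow> val" where
  "proj N i = Lam (lams (N - 1) (Val (Var (N - 1 - i))))"

lemma closed_proj [simp]: "closed_v 0 (proj N i)"
  by (simp add: proj_def)

lemma proj_steps:
  assumes "i < length vs" "\<forall>v\<in>set vs. closed_v 0 v"
  shows "(det_step ^^ length vs) (apps (Val (proj (length vs) i)) (vs @ ws)) (apps (Val (vs ! i)) ws)"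
proof -
  obtain n where n: "length vs = Suc n" using assms by (cases "length vs") auto
  then have "(det_step ^^ length vs) (apps (Val (proj (length vs) i)) (vs @ ws))
      (apps (substs vs (Val (Var (n - i)))) ws)"
    using apps_Lam_eq_steps[of "proj (length vs) i" n "Val (Var (n - i))" vs ws] assms
    by (simp add: proj_def)
  moreover have "substs vs (Val (Var (n - i))) = Val (vs ! i)"
    using substs_Var[of "n - i" vs] n assms by simp
  ultimately show ?thesis by simp
qed

definition scott_nil :: val where
  "scott_nil = Lam (lams 1 (Val (Var 0)))"

definition scott_cons :: "val \<Rightarrow> val \<Rightarrow> val" where
  "scott_cons h t = Lam (lams 1 (apps (Val (Var 1)) [h, t]))"

lemma closed_scott_nil [simp]: "closed_v 0 scott_nil"
  by (simp add: scott_nil_def)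

lemma closed_scott_cons [simp]: "closed_v 0 h \<Longrightarrow> closed_v 0 t \<Longrightarrow> closed_v 0 (scott_cons h t)"
  by (simp add: scott_cons_def)

lemma scott_nil_steps:
  assumes "closed_v 0 a" "closed_v 0 b"
  shows "(det_step ^^ 2) (apps (Val scott_nil) (a # b # ws)) (apps (Val b) ws)"
  using apps_Lam_eq_steps[of scott_nil 1 "Val (Var 0)" "[a, b]" ws] assms
  by (simp add: scott_nil_def numeral_2_eq_2)

lemma scott_cons_steps:
  assumes "closed_v 0 h" "closed_v 0 t" "closed_v 0 a" "closed_v 0 b"
  shows "(det_step ^^ 2) (apps (Val (scott_cons h t)) (a # b # ws)) (apps (Val a) (h # t # ws))"
  using apps_Lam_eq_steps[of "scott_cons h t" 1 "apps (Val (Var 1)) [h, t]" "[a, b]" ws] assms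
  by (simp add: scott_cons_def numeral_2_eq_2)

section \<open>Tape symbols and states as terms\<close>

lemma set_alph [simp]: "set (alph :: 'a::{finite,linorder} list) = UNIV"
  by (simp add: alph_def)

lemma length_alph [simp]: "length (alph :: 'a::{finite,linorder} list) = CARD('a)"
  by (simp add: alph_def)

lemma pos_in_nth: "x \<in> set xs \<Longrightarrow> pos_in xs x < length xs \<and> xs ! pos_in xs x = x"
  by (induct xs) auto

lemma sym_idx_less [simp]: "sym_idx (c::'a::{finite,linorder}) < CARD('a)"
  using pos_in_nth[of c "alph :: 'a list"] by (simp add: sym_idx_def)

lemma nth_alph_sym_idx [simp]: "(alph :: 'a::{finite,linorder} list) ! sym_idx c = c"
  using pos_in_nth[of c "alph :: 'a list"] by (simp add: sym_idx_def)

lemma closed_enc_str [simp]: "closed_v 0 (enc_str (s :: 'a::{finite,linorder} list))"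
  by (induct s) auto

fun tsym_idx :: "'a::{finite,linorder} option \<Rightarrow> nat" where
  "tsym_idx None = 0"
| "tsym_idx (Some c) = Suc (sym_idx c)"

definition tape_syms :: "'a::{finite,linorder} option list" where
  "tape_syms = None # map Some alph"

lemma length_tape_syms [simp]:
  "length (tape_syms :: 'a::{finite,linorder} option list) = Suc CARD('a)"
  by (simp add: tape_syms_def)

lemma tsym_idx_less [simp]: "tsym_idx (x :: 'a::{finite,linorder} option) < Suc CARD('a)"
  by (cases x) auto

lemma nth_tape_syms_tsym_idx [simp]:
  "(tape_syms :: 'a::{finite,linorder} option list) ! tsym_idx x = x"
  using pos_in_nth[of _ "alph :: 'a list"] by (cases x) (auto simp: tape_syms_def sym_idx_def)

definition sym_val :: "'a::{finite,linorder} option \<Rightarrow> val" where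
  "sym_val x = proj (Suc CARD('a)) (tsym_idx x)"

lemma closed_sym_val [simp]: "closed_v 0 (sym_val x)"
  by (simp add: sym_val_def)

lemma sym_val_steps:
  assumes "length vs = Suc CARD('a)" "\<forall>v\<in>set vs. closed_v 0 v"
  shows "(det_step ^^ Suc CARD('a)) (apps (Val (sym_val (x :: 'a::{finite,linorder} option))) (vs @ ws))
           (apps (Val (vs ! tsym_idx x)) ws)"
proof -
  have "tsym_idx x < length vs" using assms(1) by simp
  from proj_steps[OF this assms(2)] show ?thesis unfolding assms(1) sym_val_def .
qed

fun tape_val :: "'a::{finite,linorder} option list \<Rightarrow> val" where
  "tape_val [] = scott_nil"
| "tape_val (x # xs) = scott_cons (sym_val x) (tape_val xs)"

lemma closed_tape_val [simp]: "closed_v 0 (tape_val xs)"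
  by (induct xs) auto

definition states :: "'q::finite list" where
  "states = (SOME xs. distinct xs \<and> set xs = UNIV)"

lemma distinct_set_states: "distinct (states :: 'q::finite list) \<and> set (states :: 'q list) = UNIV"
  unfolding states_def
  by (rule someI_ex) (use finite_distinct_list[of "UNIV :: 'q set"] in auto)

lemma set_states [simp]: "set (states :: 'q::finite list) = UNIV"
  using distinct_set_states by blast

lemma length_states [simp]: "length (states :: 'q::finite list) = CARD('q)"
  using distinct_set_states distinct_card by metis

definition state_idx :: "'q::finite \<Rightarrow> nat" where
  "state_idx q = pos_in states q"

lemma state_idx_less [simp]: "state_idx (q::'q::finite) < CARD('q)"
  using pos_in_nth[of q states] by (simp add: state_idx_def)

lemma nth_states_state_idx [simp]: "(states :: 'q::finite list) ! state_idx q = q"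
  using pos_in_nth[of q states] by (simp add: state_idx_def)

definition state_val :: "'q::finite \<Rightarrow> val" where
  "state_val q = proj CARD('q) (state_idx q)"

lemma closed_state_val [simp]: "closed_v 0 (state_val q)"
  by (simp add: state_val_def)

lemma state_val_steps:
  assumes "length vs = CARD('q)" "\<forall>v\<in>set vs. closed_v 0 v"
  shows "(det_step ^^ CARD('q)) (apps (Val (state_val (q :: 'q::finite))) (vs @ ws))
           (apps (Val (vs ! state_idx q)) ws)"
proof -
  have "state_idx q < length vs" using assms(1) by simp
  from proj_steps[OF this assms(2)] show ?thesis unfolding assms(1) state_val_def .
qed

section \<open>Reversal of Scott lists in continuation-passing style\<close>

text \<open>Recursion is by self-application: the first argument of \<open>rev_app\<close> is always \<open>rev_app\<close>
  itself, and \<open>rev_app rev_app xs acc k\<close> reduces to \<open>k (rev xs @ acc)\<close>.\<close>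

definition rev_app_cons :: val where
  "rev_app_cons = Lam (lams 4 (apps (Val (Var 2))
     [Var 2, Var 3, Lam (lams 1 (apps (Val (Var 1)) [Var 6, Var 3])), Var 0]))"

definition rev_app_nil :: val where
  "rev_app_nil = Lam (lams 2 (App (Val (Var 0)) (Var 1)))"

definition rev_app :: val where
  "rev_app = Lam (lams 3 (apps (Val (Var 2)) [rev_app_cons, rev_app_nil, Var 3, Var 1, Var 0]))"

lemma closed_rev_app_cons [simp]: "closed_v 0 rev_app_cons"
  by (simp add: rev_app_cons_def)

lemma closed_rev_app_nil [simp]: "closed_v 0 rev_app_nil"
  by (simp add: rev_app_nil_def)

lemma closed_rev_app [simp]: "closed_v 0 rev_app"
  by (simp add: rev_app_def)

lemma rev_app_steps:
  assumes k: "closed_v 0 k"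
  shows "(det_step ^^ (11 * length xs + 9)) (apps (Val rev_app) [rev_app, tape_val xs, tape_val ys, k])
           (App (Val k) (tape_val (rev xs @ ys)))"
proof (induct xs arbitrary: ys)
  case Nil
  have "(det_step ^^ 4) (apps (Val rev_app) [rev_app, tape_val [], tape_val ys, k])
      (apps (Val scott_nil) [rev_app_cons, rev_app_nil, rev_app, tape_val ys, k])"
    using apps_Lam_eq_steps[OF rev_app_def, of "[rev_app, tape_val [], tape_val ys, k]" "[]"] k by simp
  also have "(det_step ^^ 2) \<dots> (apps (Val rev_app_nil) [rev_app, tape_val ys, k])"
    using scott_nil_steps[of rev_app_cons rev_app_nil "[rev_app, tape_val ys, k]"] by simp
  also have "(det_step ^^ 3) \<dots> (App (Val k) (tape_val ys))"
    using apps_Lam_eq_steps[OF rev_app_nil_def, of "[rev_app, tape_val ys, k]" "[]"] k by simp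
  finally show ?case by simp
next
  case (Cons x xs)
  have "(det_step ^^ 4) (apps (Val rev_app) [rev_app, tape_val (x # xs), tape_val ys, k])
      (apps (Val (scott_cons (sym_val x) (tape_val xs))) [rev_app_cons, rev_app_nil, rev_app, tape_val ys, k])"
    using apps_Lam_eq_steps[OF rev_app_def, of "[rev_app, tape_val (x # xs), tape_val ys, k]" "[]"] k
    by simp
  also have "(det_step ^^ 2) \<dots> (apps (Val rev_app_cons) [sym_val x, tape_val xs, rev_app, tape_val ys, k])"
    using scott_cons_steps[of "sym_val x" "tape_val xs" rev_app_cons rev_app_nil "[rev_app, tape_val ys, k]"]
    by simp
  also have "(det_step ^^ 5) \<dots> (apps (Val rev_app) [rev_app, tape_val xs, tape_val (x # ys), k])"
    using apps_Lam_eq_steps[OF rev_app_cons_def, of "[sym_val x, tape_val xs, rev_app, tape_val ys, k]" "[]"] k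
    by (simp add: scott_cons_def)
  also have "(det_step ^^ (11 * length xs + 9)) \<dots> (App (Val k) (tape_val (rev (x # xs) @ ys)))"
    using Cons[of "x # ys"] by simp
  finally show ?case by simp
qed

section \<open>From a tape list to a Scott string\<close>

text \<open>The open term \<open>out_char c\<close> refers to the string built so far, bound by \<open>out_cell\<close>,
  so that it becomes the encoding of \<open>c\<close> followed by that string.\<close>

definition out_char :: "'a::{finite,linorder} \<Rightarrow> val" where
  "out_char c = Lam (lams CARD('a) (App (Val (Var (CARD('a) - sym_idx c))) (Var (Suc CARD('a)))))"

text \<open>The blank case is never reached: the output tape is a list of letters.\<close>

fun out_sym :: "'a::{finite,linorder} option \<Rightarrow> val" where
  "out_sym None = scott_nil"
| "out_sym (Some c) = out_char c"

definition out_cell :: "'a::{finite,linorder} option \<Rightarrow> val" where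
  "out_cell x = Lam (lams 2 (apps (Val (Var 1)) [Var 1, Var 2, out_sym x]))"

definition out_cells :: "'a::{finite,linorder} itself \<Rightarrow> val list" where
  "out_cells _ = map out_cell (tape_syms :: 'a option list)"

definition build_cons :: "'a::{finite,linorder} itself \<Rightarrow> val" where
  "build_cons T = Lam (lams 3 (apps (Val (Var 3)) (out_cells T @ [Var 2, Var 1, Var 0])))"

definition build :: "'a::{finite,linorder} itself \<Rightarrow> val" where
  "build T = Lam (lams 2 (apps (Val (Var 1)) [build_cons T, scott_nil, Var 2, Var 0]))"

lemma closed_out_cell [simp]: "closed_v 0 (out_cell x)"
  by (cases x) (auto simp: out_cell_def out_char_def)

lemma closed_out_cells [simp]: "\<forall>v\<in>set (out_cells T). closed_v 0 v"
  by (auto simp: out_cells_def)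

lemma closed_build_cons [simp]: "closed_v 0 (build_cons T)"
  by (auto simp: build_cons_def)

lemma closed_build [simp]: "closed_v 0 (build T)"
  by (simp add: build_def)

lemma length_out_cells [simp]:
  "length (out_cells (T :: 'a::{finite,linorder} itself)) = Suc CARD('a)"
  by (simp add: out_cells_def)

lemma nth_out_cells [simp]:
  "out_cells (T :: 'a::{finite,linorder} itself) ! tsym_idx (x :: 'a option) = out_cell x"
  by (simp add: out_cells_def)

lemma build_steps:
  fixes zs ys :: "'a::{finite,linorder} list"
  shows "(det_step ^^ ((CARD('a) + 13) * length zs + 7))
     (apps (Val (build TYPE('a))) [build TYPE('a), tape_val (map Some zs), enc_str ys])
     (Val (enc_str (rev zs @ ys)))"
proof (induct zs arbitrary: ys)
  case Nil
  let ?B = "build TYPE('a)"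
  have "(det_step ^^ 3) (apps (Val ?B) [?B, tape_val (map Some []), enc_str ys])
      (apps (Val scott_nil) [build_cons TYPE('a), scott_nil, ?B, enc_str ys])"
    using apps_Lam_eq_steps[OF build_def[of "TYPE('a)"],
        where vs = "[?B, tape_val [], enc_str ys]" and ws = "[]"]
    by simp
  also have "(det_step ^^ 2) \<dots> (apps (Val scott_nil) [?B, enc_str ys])"
    using scott_nil_steps[of "build_cons TYPE('a)" scott_nil "[?B, enc_str ys]"] by simp
  also have "(det_step ^^ 2) \<dots> (Val (enc_str ys))"
    using scott_nil_steps[of ?B "enc_str ys" "[]"] by simp
  finally show ?case by simp
next
  case (Cons z zs)
  let ?B = "build TYPE('a)" and ?T = "tape_val (map Some zs)"
  have "(det_step ^^ 3) (apps (Val ?B) [?B, tape_val (map Some (z # zs)), enc_str ys])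
      (apps (Val (scott_cons (sym_val (Some z)) ?T)) [build_cons TYPE('a), scott_nil, ?B, enc_str ys])"
    using apps_Lam_eq_steps[OF build_def[of "TYPE('a)"],
        where vs = "[?B, tape_val (map Some (z # zs)), enc_str ys]" and ws = "[]"]
    by simp
  also have "(det_step ^^ 2) \<dots> (apps (Val (build_cons TYPE('a))) [sym_val (Some z), ?T, ?B, enc_str ys])"
    using scott_cons_steps[of "sym_val (Some z)" ?T "build_cons TYPE('a)" scott_nil "[?B, enc_str ys]"]
    by simp
  also have "(det_step ^^ 4) \<dots> (apps (Val (sym_val (Some z))) (out_cells TYPE('a) @ [?T, ?B, enc_str ys]))"
    using apps_Lam_eq_steps[OF build_cons_def[of "TYPE('a)"],
        where vs = "[sym_val (Some z), ?T, ?B, enc_str ys]" and ws = "[]"]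
    by simp
  also have "(det_step ^^ Suc CARD('a)) \<dots> (apps (Val (out_cell (Some z))) [?T, ?B, enc_str ys])"
    using sym_val_steps[OF length_out_cells closed_out_cells[of "TYPE('a)"],
        of "Some z" "[?T, ?B, enc_str ys]"]
    unfolding nth_out_cells .
  also have "(det_step ^^ 3) \<dots> (apps (Val ?B) [?B, ?T, enc_str (z # ys)])"
    using apps_Lam_eq_steps[OF out_cell_def[of "Some z"], of "[?T, ?B, enc_str ys]" "[]"]
    by (simp add: out_char_def less_Suc_eq_le le_Suc_eq)
  also have "(det_step ^^ ((CARD('a) + 13) * length zs + 7)) \<dots> (Val (enc_str (rev (z # zs) @ ys)))"
    using Cons[of "z # ys"] by simp
  finally show ?case by (simp add: algebra_simps)
qed

definition output_cont :: "'a::{finite,linorder} itself \<Rightarrow> val" where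
  "output_cont T = Lam (apps (Val (build T)) [build T, Var 0, enc_str ([] :: 'a list)])"

lemma closed_output_cont [simp]: "closed_v 0 (output_cont T)"
  by (simp add: output_cont_def)

section \<open>One machine step\<close>

text \<open>An action is applied to the loop term \<open>S\<close> and the two tape halves and returns
  \<open>S S q' a' L' R'\<close>; moving into a missing cell produces a blank.\<close>

definition stay_act :: "'q::finite \<Rightarrow> 'a::{finite,linorder} option \<Rightarrow> val" where
  "stay_act q' b = Lam (lams 2 (apps (Val (Var 2)) [Var 2, state_val q', sym_val b, Var 1, Var 0]))"

definition left_act_cons :: "'q::finite \<Rightarrow> 'a::{finite,linorder} option \<Rightarrow> val" where
  "left_act_cons q' b = Lam (lams 3 (apps (Val (Var 1))
     [Var 1, state_val q', Var 3, Var 2, Lam (lams 1 (apps (Val (Var 1)) [sym_val b, Var 2]))]))"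

definition left_act_nil :: "'q::finite \<Rightarrow> 'a::{finite,linorder} option \<Rightarrow> val" where
  "left_act_nil q' b = Lam (lams 1 (apps (Val (Var 1))
     [Var 1, state_val q', sym_val (None :: 'a option), scott_nil,
      Lam (lams 1 (apps (Val (Var 1)) [sym_val b, Var 2]))]))"

definition left_act :: "'q::finite \<Rightarrow> 'a::{finite,linorder} option \<Rightarrow> val" where
  "left_act q' b = Lam (lams 2 (apps (Val (Var 1)) [left_act_cons q' b, left_act_nil q' b, Var 2, Var 0]))"

definition right_act_cons :: "'q::finite \<Rightarrow> 'a::{finite,linorder} option \<Rightarrow> val" where
  "right_act_cons q' b = Lam (lams 3 (apps (Val (Var 1))
     [Var 1, state_val q', Var 3, Lam (lams 1 (apps (Val (Var 1)) [sym_val b, Var 2])), Var 2]))"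

definition right_act_nil :: "'q::finite \<Rightarrow> 'a::{finite,linorder} option \<Rightarrow> val" where
  "right_act_nil q' b = Lam (lams 1 (apps (Val (Var 1))
     [Var 1, state_val q', sym_val (None :: 'a option),
      Lam (lams 1 (apps (Val (Var 1)) [sym_val b, Var 2])), scott_nil]))"

definition right_act :: "'q::finite \<Rightarrow> 'a::{finite,linorder} option \<Rightarrow> val" where
  "right_act q' b = Lam (lams 2 (apps (Val (Var 0)) [right_act_cons q' b, right_act_nil q' b, Var 2, Var 1]))"

fun move_act :: "dir \<Rightarrow> 'q::finite \<Rightarrow> 'a::{finite,linorder} option \<Rightarrow> val" where
  "move_act DStay = stay_act"
| "move_act DLeft = left_act"
| "move_act DRight = right_act"

definition halt_act :: "'a::{finite,linorder} itself \<Rightarrow> val" where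
  "halt_act T = Lam (lams 2 (apps (Val rev_app) [rev_app, Var 0, scott_nil, output_cont T]))"

definition action :: "('a::{finite,linorder}, 'q::finite) tm \<Rightarrow> 'q \<Rightarrow> 'a option \<Rightarrow> val" where
  "action M q x = (case delta M q x of
      None \<Rightarrow> halt_act TYPE('a)
    | Some (q', b, d) \<Rightarrow> move_act d q' b)"

definition table_row :: "('a::{finite,linorder}, 'q::finite) tm \<Rightarrow> 'a option \<Rightarrow> val" where
  "table_row M x = Lam (apps (Val (Var 0)) (map (\<lambda>q. action M q x) states))"

definition table :: "('a::{finite,linorder}, 'q::finite) tm \<Rightarrow> val list" where
  "table M = map (table_row M) tape_syms"

definition step_loop :: "('a::{finite,linorder}, 'q::finite) tm \<Rightarrow> val" where
  "step_loop M = Lam (lams 2 (apps (Val (Var 0)) (table M @ [Var 1, Var 2])))"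

fun cfg_trm :: "('a::{finite,linorder}, 'q::finite) tm \<Rightarrow> ('a, 'q) config \<Rightarrow> trm" where
  "cfg_trm M (s, a, r, q) =
     apps (Val (step_loop M)) [step_loop M, state_val q, sym_val a, tape_val (rev s), tape_val r]"

fun dispatch_trm :: "('a::{finite,linorder}, 'q::finite) tm \<Rightarrow> ('a, 'q) config \<Rightarrow> trm" where
  "dispatch_trm M (s, a, r, q) = apps (Val (action M q a)) [step_loop M, tape_val (rev s), tape_val r]"

lemma closed_acts [simp]:
  "closed_v 0 (stay_act q b)" "closed_v 0 (left_act_cons q b)" "closed_v 0 (left_act_nil q b)"
  "closed_v 0 (left_act q b)" "closed_v 0 (right_act_cons q b)" "closed_v 0 (right_act_nil q b)"
  "closed_v 0 (right_act q b)"
  by (simp_all add: stay_act_def left_act_def left_act_cons_def left_act_nil_def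
      right_act_def right_act_cons_def right_act_nil_def)

lemma closed_move_act [simp]: "closed_v 0 (move_act d q b)"
  by (cases d) simp_all

lemma closed_halt_act [simp]: "closed_v 0 (halt_act T)"
  by (simp add: halt_act_def)

lemma closed_action [simp]: "closed_v 0 (action M q x)"
  by (auto simp: action_def split: option.split)

lemma closed_table [simp]: "\<forall>v\<in>set (table M). closed_v 0 v"
  by (auto simp: table_def table_row_def)

lemma closed_step_loop [simp]: "closed_v 0 (step_loop M)"
  by (simp add: step_loop_def)

lemma length_table [simp]:
  "length (table (M :: ('a::{finite,linorder}, 'q::finite) tm)) = Suc CARD('a)"
  by (simp add: table_def)

lemma nth_table [simp]: "table M ! tsym_idx x = table_row M x"
  by (simp add: table_def)

lemma dispatch_steps:
  fixes M :: "('a::{finite,linorder}, 'q::finite) tm"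
  shows "(det_step ^^ (CARD('a) + CARD('q) + 5)) (cfg_trm M c) (dispatch_trm M c)"
proof -
  obtain s a r q where c: "c = (s, a, r, q)" by (cases c) auto
  let ?L = "tape_val (rev s)" and ?R = "tape_val r"
  have "(det_step ^^ 3) (cfg_trm M c) (apps (Val (sym_val a)) (table M @ [state_val q, step_loop M, ?L, ?R]))"
    using apps_Lam_eq_steps[where vs = "[step_loop M, state_val q, sym_val a]" and ws = "[?L, ?R]",
        OF step_loop_def[of M]]
    by (simp add: c apps_append)
  also have "(det_step ^^ Suc CARD('a)) \<dots> (apps (Val (table_row M a)) [state_val q, step_loop M, ?L, ?R])"
    using sym_val_steps[OF length_table closed_table[of M], of a "[state_val q, step_loop M, ?L, ?R]"]
    unfolding nth_table .
  also have "(det_step ^^ 1) \<dots>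
      (apps (Val (state_val q)) (map (\<lambda>q. action M q a) states @ [step_loop M, ?L, ?R]))"
    using apps_Lam_eq_step[OF table_row_def[of M a], of "state_val q" "[step_loop M, ?L, ?R]"]
    by (simp add: apps_append)
  also have "(det_step ^^ CARD('q)) \<dots> (dispatch_trm M c)"
    using state_val_steps[of "map (\<lambda>q. action M q a) states" q "[step_loop M, ?L, ?R]"]
    by (simp add: c)
  finally show ?thesis by (simp add: algebra_simps)
qed

lemma stay_act_steps:
  assumes "closed_v 0 S" "closed_v 0 L" "closed_v 0 R"
  shows "(det_step ^^ 3) (apps (Val (stay_act q' b)) [S, L, R])
     (apps (Val S) [S, state_val q', sym_val b, L, R])"
  using apps_Lam_eq_steps[where vs = "[S, L, R]" and ws = "[]", OF stay_act_def[of q' b]] assms by simp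

lemma left_act_cons_steps:
  assumes "closed_v 0 S" "closed_v 0 c" "closed_v 0 L" "closed_v 0 R"
  shows "(det_step ^^ 9) (apps (Val (left_act q' b)) [S, scott_cons c L, R])
     (apps (Val S) [S, state_val q', c, L, scott_cons (sym_val b) R])"
proof -
  have "(det_step ^^ 3) (apps (Val (left_act q' b)) [S, scott_cons c L, R])
      (apps (Val (scott_cons c L)) [left_act_cons q' b, left_act_nil q' b, S, R])"
    using apps_Lam_eq_steps[where vs = "[S, scott_cons c L, R]" and ws = "[]", OF left_act_def[of q' b]] assms
    by simp
  also have "(det_step ^^ 2) \<dots> (apps (Val (left_act_cons q' b)) [c, L, S, R])"
    using scott_cons_steps[of c L "left_act_cons q' b" "left_act_nil q' b" "[S, R]"] assms by simp
  also have "(det_step ^^ 4) \<dots> (apps (Val S) [S, state_val q', c, L, scott_cons (sym_val b) R])"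
    using apps_Lam_eq_steps[where vs = "[c, L, S, R]" and ws = "[]", OF left_act_cons_def[of q' b]] assms
    by (simp add: scott_cons_def)
  finally show ?thesis by simp
qed

lemma left_act_nil_steps:
  assumes "closed_v 0 S" "closed_v 0 R"
  shows "(det_step ^^ 7) (apps (Val (left_act q' (b :: 'a::{finite,linorder} option))) [S, scott_nil, R])
     (apps (Val S) [S, state_val q', sym_val (None :: 'a option), scott_nil, scott_cons (sym_val b) R])"
proof -
  have "(det_step ^^ 3) (apps (Val (left_act q' b)) [S, scott_nil, R])
      (apps (Val scott_nil) [left_act_cons q' b, left_act_nil q' b, S, R])"
    using apps_Lam_eq_steps[where vs = "[S, scott_nil, R]" and ws = "[]", OF left_act_def[of q' b]] assms
    by simp
  also have "(det_step ^^ 2) \<dots> (apps (Val (left_act_nil q' b)) [S, R])"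
    using scott_nil_steps[of "left_act_cons q' b" "left_act_nil q' b" "[S, R]"] assms by simp
  also have "(det_step ^^ 2) \<dots>
      (apps (Val S) [S, state_val q', sym_val (None :: 'a option), scott_nil, scott_cons (sym_val b) R])"
    using apps_Lam_eq_steps[where vs = "[S, R]" and ws = "[]", OF left_act_nil_def[of q' b]] assms
    by (simp add: scott_cons_def numeral_2_eq_2)
  finally show ?thesis by simp
qed

lemma right_act_cons_steps:
  assumes "closed_v 0 S" "closed_v 0 c" "closed_v 0 L" "closed_v 0 R"
  shows "(det_step ^^ 9) (apps (Val (right_act q' b)) [S, L, scott_cons c R])
     (apps (Val S) [S, state_val q', c, scott_cons (sym_val b) L, R])"
proof -
  have "(det_step ^^ 3) (apps (Val (right_act q' b)) [S, L, scott_cons c R])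
      (apps (Val (scott_cons c R)) [right_act_cons q' b, right_act_nil q' b, S, L])"
    using apps_Lam_eq_steps[where vs = "[S, L, scott_cons c R]" and ws = "[]", OF right_act_def[of q' b]] assms
    by simp
  also have "(det_step ^^ 2) \<dots> (apps (Val (right_act_cons q' b)) [c, R, S, L])"
    using scott_cons_steps[of c R "right_act_cons q' b" "right_act_nil q' b" "[S, L]"] assms by simp
  also have "(det_step ^^ 4) \<dots> (apps (Val S) [S, state_val q', c, scott_cons (sym_val b) L, R])"
    using apps_Lam_eq_steps[where vs = "[c, R, S, L]" and ws = "[]", OF right_act_cons_def[of q' b]] assms
    by (simp add: scott_cons_def)
  finally show ?thesis by simp
qed

lemma right_act_nil_steps:
  assumes "closed_v 0 S" "closed_v 0 L"
  shows "(det_step ^^ 7) (apps (Val (right_act q' (b :: 'a::{finite,linorder} option))) [S, L, scott_nil])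
     (apps (Val S) [S, state_val q', sym_val (None :: 'a option), scott_cons (sym_val b) L, scott_nil])"
proof -
  have "(det_step ^^ 3) (apps (Val (right_act q' b)) [S, L, scott_nil])
      (apps (Val scott_nil) [right_act_cons q' b, right_act_nil q' b, S, L])"
    using apps_Lam_eq_steps[where vs = "[S, L, scott_nil]" and ws = "[]", OF right_act_def[of q' b]] assms
    by simp
  also have "(det_step ^^ 2) \<dots> (apps (Val (right_act_nil q' b)) [S, L])"
    using scott_nil_steps[of "right_act_cons q' b" "right_act_nil q' b" "[S, L]"] assms by simp
  also have "(det_step ^^ 2) \<dots>
      (apps (Val S) [S, state_val q', sym_val (None :: 'a option), scott_cons (sym_val b) L, scott_nil])"
    using apps_Lam_eq_steps[where vs = "[S, L]" and ws = "[]", OF right_act_nil_def[of q' b]] assms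
    by (simp add: scott_cons_def numeral_2_eq_2)
  finally show ?thesis by simp
qed

lemma action_steps:
  assumes "tm_step M c c'"
  shows "\<exists>k\<le>9. (det_step ^^ k) (dispatch_trm M c) (cfg_trm M c')"
  using assms
proof (induct rule: tm_step.induct)
  case (stay q a q' b s r)
  then show ?case
    using stay_act_steps[of "step_loop M" "tape_val (rev s)" "tape_val r" q' b]
    by (intro exI[of _ 3]) (simp add: action_def)
next
  case (left q a q' b s' c r)
  then show ?case
    using left_act_cons_steps[of "step_loop M" "sym_val c" "tape_val (rev s')" "tape_val r" q' b]
    by (intro exI[of _ 9]) (simp add: action_def)
next
  case (left_end q a q' b r)
  then show ?case
    using left_act_nil_steps[of "step_loop M" "tape_val r" q' b]
    by (intro exI[of _ 7]) (simp add: action_def)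
next
  case (right q a q' b s c r')
  then show ?case
    using right_act_cons_steps[of "step_loop M" "sym_val c" "tape_val (rev s)" "tape_val r'" q' b]
    by (intro exI[of _ 9]) (simp add: action_def)
next
  case (right_end q a q' b s)
  then show ?case
    using right_act_nil_steps[of "step_loop M" "tape_val (rev s)" q' b]
    by (intro exI[of _ 7]) (simp add: action_def)
qed

lemma tm_step_simulation:
  fixes M :: "('a::{finite,linorder}, 'q::finite) tm"
  assumes "tm_step M c c'"
  shows "\<exists>n. (det_step ^^ n) (cfg_trm M c) (cfg_trm M c') \<and>
           1 \<le> n \<and> n \<le> CARD('a) + CARD('q) + 14"
proof -
  obtain k where "k \<le> 9" "(det_step ^^ k) (dispatch_trm M c) (cfg_trm M c')"
    using action_steps[OF assms] by blast
  then show ?thesis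
    using relpowp_trans[OF dispatch_steps[of M c]]
    by (intro exI[of _ "CARD('a) + CARD('q) + 5 + k"]) auto
qed

lemma tm_steps_simulation:
  fixes M :: "('a::{finite,linorder}, 'q::finite) tm"
  assumes "(tm_step M ^^ n) c c'"
  shows "\<exists>j. (det_step ^^ j) (cfg_trm M c) (cfg_trm M c') \<and>
           n \<le> j \<and> j \<le> n * (CARD('a) + CARD('q) + 14)"
  using assms
proof (induct n arbitrary: c')
  case 0
  then show ?case by (intro exI[of _ 0]) simp
next
  case (Suc n)
  from Suc.prems obtain c'' where "(tm_step M ^^ n) c c''" "tm_step M c'' c'"
    by (auto elim: relpowp_Suc_E)
  with Suc.hyps tm_step_simulation[of M c'' c'] obtain j k where
    "(det_step ^^ j) (cfg_trm M c) (cfg_trm M c'')" "n \<le> j" "j \<le> n * (CARD('a) + CARD('q) + 14)"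
    "(det_step ^^ k) (cfg_trm M c'') (cfg_trm M c')" "1 \<le> k" "k \<le> CARD('a) + CARD('q) + 14"
    by blast
  then show ?case by (intro exI[of _ "j + k"]) (auto intro: relpowp_trans)
qed

fun tape_len :: "('a, 'q) config \<Rightarrow> nat" where
  "tape_len (s, a, r, q) = length s + length r"

lemma tape_len_step: "tm_step M c c' \<Longrightarrow> tape_len c' \<le> tape_len c + 1"
  by (induct rule: tm_step.induct) auto

lemma tape_len_steps: "(tm_step M ^^ n) c c' \<Longrightarrow> tape_len c' \<le> tape_len c + n"
proof (induct n arbitrary: c')
  case 0
  then show ?case by simp
next
  case (Suc n)
  then obtain c'' where "(tm_step M ^^ n) c c''" "tm_step M c'' c'" by (auto elim: relpowp_Suc_E)
  then show ?case using Suc.hyps tape_len_step[of M c'' c'] by fastforce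
qed

section \<open>Reading the input\<close>

text \<open>The letters are pushed onto an accumulator, which at the end of the string is reversed and
  handed to the loop as the right half of the initial tape.\<close>

definition read_char :: "'a::{finite,linorder} \<Rightarrow> val" where
  "read_char c = Lam (lams 2 (apps (Val (Var 1))
     [Var 1, Var 2, Lam (lams 1 (apps (Val (Var 1)) [sym_val (Some c), Var 2]))]))"

definition read_chars :: "'a::{finite,linorder} itself \<Rightarrow> val list" where
  "read_chars _ = map read_char (alph :: 'a list)"

definition start_cont :: "('a::{finite,linorder}, 'q::finite) tm \<Rightarrow> val" where
  "start_cont M = Lam (apps (Val (step_loop M))
     [step_loop M, state_val (q_in M), sym_val (None :: 'a option), scott_nil, Var 0])"

definition read_end :: "('a::{finite,linorder}, 'q::finite) tm \<Rightarrow> val" where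
  "read_end M = Lam (lams 1 (apps (Val rev_app) [rev_app, Var 0, scott_nil, start_cont M]))"

definition read_loop :: "('a::{finite,linorder}, 'q::finite) tm \<Rightarrow> val" where
  "read_loop M = Lam (lams 2 (apps (Val (Var 1)) (read_chars TYPE('a) @ [read_end M, Var 2, Var 0])))"

definition compile_tm :: "('a::{finite,linorder}, 'q::finite) tm \<Rightarrow> val" where
  "compile_tm M = Lam (apps (Val (read_loop M)) [read_loop M, Var 0, scott_nil])"

lemma closed_read_char [simp]: "closed_v 0 (read_char c)"
  by (simp add: read_char_def)

lemma closed_read_chars [simp]: "\<forall>v\<in>set (read_chars T). closed_v 0 v"
  by (simp add: read_chars_def)

lemma closed_start_cont [simp]: "closed_v 0 (start_cont M)"
  by (simp add: start_cont_def)

lemma closed_read_end [simp]: "closed_v 0 (read_end M)"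
  by (simp add: read_end_def)

lemma closed_read_loop [simp]: "closed_v 0 (read_loop M)"
  by (simp add: read_loop_def)

lemma closed_compile_tm [simp]: "closed_v 0 (compile_tm M)"
  by (simp add: compile_tm_def)

lemma length_read_chars [simp]: "length (read_chars (T :: 'a::{finite,linorder} itself)) = CARD('a)"
  by (simp add: read_chars_def)

lemma read_loop_steps:
  fixes M :: "('a::{finite,linorder}, 'q::finite) tm" and s :: "'a list"
  shows "(det_step ^^ ((CARD('a) + 7) * length s + CARD('a) + 6))
     (apps (Val (read_loop M)) [read_loop M, enc_str s, tape_val acc])
     (apps (Val rev_app) [rev_app, tape_val (rev (map Some s) @ acc), scott_nil, start_cont M])"
proof (induct s arbitrary: acc)
  case Nil
  let ?vs = "read_chars TYPE('a) @ [read_end M]"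
  have "(det_step ^^ 3) (apps (Val (read_loop M)) [read_loop M, enc_str ([] :: 'a list), tape_val acc])
      (apps (Val (enc_str ([] :: 'a list))) (?vs @ [read_loop M, tape_val acc]))"
    using apps_Lam_eq_steps[where vs = "[read_loop M, enc_str ([] :: 'a list), tape_val acc]" and ws = "[]",
        OF read_loop_def[of M]]
    by (simp add: apps_append)
  also have "(det_step ^^ Suc CARD('a)) \<dots> (apps (Val (read_end M)) [read_loop M, tape_val acc])"
  proof -
    have "enc_str ([] :: 'a list) = Lam (lams CARD('a) (Val (Var 0)))" by simp
    from apps_Lam_eq_steps[where vs = ?vs and ws = "[read_loop M, tape_val acc]", OF this]
    show ?thesis using substs_Var[of 0 ?vs] by (simp add: nth_append)
  qed
  also have "(det_step ^^ 2) \<dots> (apps (Val rev_app) [rev_app, tape_val acc, scott_nil, start_cont M])"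
    using apps_Lam_eq_steps[where vs = "[read_loop M, tape_val acc]" and ws = "[]", OF read_end_def[of M]]
    by (simp add: numeral_2_eq_2)
  finally show ?case by (simp add: add.commute)
next
  case (Cons c r)
  let ?vs = "read_chars TYPE('a) @ [read_end M]"
  have "(det_step ^^ 3) (apps (Val (read_loop M)) [read_loop M, enc_str (c # r), tape_val acc])
      (apps (Val (enc_str (c # r))) (?vs @ [read_loop M, tape_val acc]))"
    using apps_Lam_eq_steps[where vs = "[read_loop M, enc_str (c # r), tape_val acc]" and ws = "[]",
        OF read_loop_def[of M]]
    by (simp add: apps_append)
  also have "(det_step ^^ Suc CARD('a)) \<dots> (apps (Val (read_char c)) [enc_str r, read_loop M, tape_val acc])"
  proof -
    have "enc_str (c # r) = Lam (lams CARD('a) (App (Val (Var (CARD('a) - sym_idx c))) (enc_str r)))"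
      by simp
    from apps_Lam_eq_steps[where vs = ?vs and ws = "[read_loop M, tape_val acc]", OF this]
    show ?thesis using substs_Var[of "CARD('a) - sym_idx c" ?vs] sym_idx_less[of c]
      by (simp add: substs_App nth_append read_chars_def)
  qed
  also have "(det_step ^^ 3) \<dots> (apps (Val (read_loop M)) [read_loop M, enc_str r, tape_val (Some c # acc)])"
    using apps_Lam_eq_steps[where vs = "[enc_str r, read_loop M, tape_val acc]" and ws = "[]",
        OF read_char_def[of c]]
    by (simp add: scott_cons_def)
  also have "(det_step ^^ ((CARD('a) + 7) * length r + CARD('a) + 6)) \<dots>
      (apps (Val rev_app) [rev_app, tape_val (rev (map Some (c # r)) @ acc), scott_nil, start_cont M])"
    using Cons[of "Some c # acc"] by simp
  finally show ?case by (simp add: algebra_simps)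
qed

lemma input_steps:
  fixes M :: "('a::{finite,linorder}, 'q::finite) tm" and s :: "'a list"
  shows "(det_step ^^ ((CARD('a) + 18) * length s + CARD('a) + 17))
     (App (Val (compile_tm M)) (enc_str s)) (cfg_trm M ([], None, map Some s, q_in M))"
proof -
  have "(det_step ^^ 1) (App (Val (compile_tm M)) (enc_str s))
      (apps (Val (read_loop M)) [read_loop M, enc_str s, tape_val ([] :: 'a option list)])"
    using apps_Lam_eq_step[OF compile_tm_def[of M], of "enc_str s" "[]"] by simp
  also have "(det_step ^^ ((CARD('a) + 7) * length s + CARD('a) + 6)) \<dots>
      (apps (Val rev_app) [rev_app, tape_val (rev (map Some s)), scott_nil, start_cont M])"
    using read_loop_steps[where acc = "[]"] by simp
  also have "(det_step ^^ (11 * length s + 9)) \<dots> (App (Val (start_cont M)) (tape_val (map Some s)))"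
    using rev_app_steps[of "start_cont M" "rev (map Some s)" "[]"] by simp
  also have "(det_step ^^ 1) \<dots> (cfg_trm M ([], None, map Some s, q_in M))"
    using apps_Lam_eq_step[OF start_cont_def[of M], of "tape_val (map Some s)" "[]"] by simp
  finally show ?thesis by (simp add: algebra_simps)
qed

section \<open>Running the compiled machine\<close>

lemma output_steps:
  fixes M :: "('a::{finite,linorder}, 'q::finite) tm" and t :: "'a list"
  assumes "valid_tm M"
  shows "(det_step ^^ ((CARD('a) + 24) * length t + CARD('a) + CARD('q) + 25))
     (cfg_trm M ([], None, map Some t, q_fin M)) (Val (enc_str t))"
proof -
  from assms have "delta M (q_fin M) None = None"
    unfolding valid_tm_def by blast
  then have "action M (q_fin M) None = halt_act TYPE('a)"
    by (simp add: action_def)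
  then have "(det_step ^^ (CARD('a) + CARD('q) + 5)) (cfg_trm M ([], None, map Some t, q_fin M))
      (apps (Val (halt_act TYPE('a))) [step_loop M, scott_nil, tape_val (map Some t)])"
    using dispatch_steps[of M "([], None, map Some t, q_fin M)"] by simp
  also have "(det_step ^^ 3) \<dots>
      (apps (Val rev_app)
        [rev_app, tape_val (map Some t), tape_val ([] :: 'a option list), output_cont TYPE('a)])"
    using apps_Lam_eq_steps[where vs = "[step_loop M, scott_nil, tape_val (map Some t)]" and ws = "[]",
        OF halt_act_def[of "TYPE('a)"]]
    by simp
  also have "(det_step ^^ (11 * length t + 9)) \<dots>
      (App (Val (output_cont TYPE('a))) (tape_val (map Some (rev t))))"
    using rev_app_steps[of "output_cont TYPE('a)" "map Some t" "[]"] by (simp add: rev_map)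
  also have "(det_step ^^ 1) \<dots>
      (apps (Val (build TYPE('a))) [build TYPE('a), tape_val (map Some (rev t)), enc_str ([] :: 'a list)])"
    using apps_Lam_eq_step[OF output_cont_def[of "TYPE('a)"], of "tape_val (map Some (rev t))" "[]"]
    by simp
  also have "(det_step ^^ ((CARD('a) + 13) * length t + 7)) \<dots> (Val (enc_str t))"
    using build_steps[of "rev t" "[]"] by simp
  finally show ?thesis by (simp add: algebra_simps)
qed

lemma compile_tm_steps:
  fixes M :: "('a::{finite,linorder}, 'q::finite) tm" and s t :: "'a list"
  assumes "valid_tm M"
    and run: "(tm_step M ^^ n) ([], None, map Some s, q_in M) ([], None, map Some t, q_fin M)"
  defines "B \<equiv> 2 * CARD('a) + CARD('q) + 42"
  shows "\<exists>k. (det_step ^^ k) (App (Val (compile_tm M)) (enc_str s)) (Val (enc_str t)) \<and>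
           n + length s \<le> k \<and> k \<le> B * (n + length s) + B"
proof -
  obtain j where sim: "(det_step ^^ j) (cfg_trm M ([], None, map Some s, q_in M))
      (cfg_trm M ([], None, map Some t, q_fin M))"
    and "n \<le> j" "j \<le> n * (CARD('a) + CARD('q) + 14)"
    using tm_steps_simulation[OF run] by blast
  moreover have "length t \<le> length s + n"
    using tape_len_steps[OF run] by simp
  then have "(CARD('a) + 24) * length t \<le> (CARD('a) + 24) * (length s + n)"
    by (rule mult_le_mono2)
  ultimately show ?thesis
    using relpowp_trans[OF relpowp_trans[OF input_steps sim] output_steps[OF assms(1)]]
    unfolding B_def by (intro exI) (auto simp: algebra_simps)
qed

theorem mainTheorem9:
  fixes M :: "('a::{finite,linorder}, 'q::finite) tm"
    and f :: "'a list \<Rightarrow> 'a list" and g :: "nat \<Rightarrow> nat"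
  assumes "valid_tm M"
    and "computes_in_time M f g"
  shows "\<exists>Mbar (A::real) (B::real) (C::real). closed Mbar \<and> A > 0 \<and> B > 0 \<and> C > 0 \<and>
           (\<forall>s :: 'a list. \<exists>n. (det_step ^^ n) (App Mbar (enc_str s)) (Val (enc_str (f s))) \<and>
              A * real (g (length s) + length s) \<le> real n \<and>
              real n \<le> B * real (g (length s) + length s) + C)"
proof -
  define B where "B = 2 * CARD('a) + CARD('q) + 42"
  have "\<exists>n. (det_step ^^ n) (App (Val (compile_tm M)) (enc_str s)) (Val (enc_str (f s))) \<and>
      1 * real (g (length s) + length s) \<le> real n \<and>
      real n \<le> real B * real (g (length s) + length s) + real B" for s :: "'a list"
  proof -
    have "(tm_step M ^^ g (length s)) ([], None, map Some s, q_in M) ([], None, map Some (f s), q_fin M)"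
      using assms(2) unfolding computes_in_time_def by blast
    from compile_tm_steps[OF assms(1) this] obtain k where
      "(det_step ^^ k) (App (Val (compile_tm M)) (enc_str s)) (Val (enc_str (f s)))"
      "g (length s) + length s \<le> k" and upper: "k \<le> B * (g (length s) + length s) + B"
      unfolding B_def by blast
    moreover from upper have "real k \<le> real (B * (g (length s) + length s) + B)"
      by (simp only: of_nat_le_iff)
    ultimately show ?thesis by (intro exI[of _ k]) simp
  qed
  moreover have "closed (Val (compile_tm M))"
    by (simp add: closed_def)
  ultimately show ?thesis
    by (intro exI[of _ "Val (compile_tm M)"] exI[of _ "1::real"] exI[of _ "real B"]) (simp add: B_def)
qed

end
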